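(* Consider the system $\dot q=Mp$, $\dot p=-M^Tq-\nabla\psi(p)+Bu$ with $q,p\in\mathbb R^n$, where $M\in\mathbb R^{n\times n}$ is invertible, $B\in\mathbb R^{n\times m}$, and $\psi:\mathbb R^n\to\mathbb R$ is continuously differentiable with locally Lipschitz gradient, strictly convex, and satisfies $\lim_{\|x\|\to\infty}\psi(x)/\|x\|=\infty$. If the input $u\equiv\mathrm u\in\mathbb R^m$ is constant, then every trajectory satisfies $p(t)\to p_0=0$ and $q(t)\to q_0=(M^T)^{-1}B\mathrm u-(M^T)^{-1}\nabla\psi(0)$ as $t\to\infty$. *)

theory Defs
  imports "HOL-Analysis.Analysis"
begin

definition strictly_convex_on :: "'a::real_vector set \<Rightarrow> ('a \<Rightarrow> real) \<Rightarrow> bool" where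
  "strictly_convex_on S f \<longleftrightarrow>
     (\<forall>x\<in>S. \<forall>y\<in>S. \<forall>t::real. x \<noteq> y \<and> 0 < t \<and> t < 1 \<longrightarrow>
        f ((1 - t) *\<^sub>R x + t *\<^sub>R y) < (1 - t) * f x + t * f y)"

end

theory Submission
  imports Defs
begin

text \<open>
  With \<open>q\<^sub>0\<close> the equilibrium, \<open>V = \<parallel>q - q\<^sub>0\<parallel>\<^sup>2 + \<parallel>p\<parallel>\<^sup>2\<close> is a Lyapunov function: the
  terms coming from \<open>M\<close> and \<open>M\<^sup>T\<close> cancel, leaving
  \<open>V' = -2 p \<bullet> (\<nabla>\<psi>(p) - \<nabla>\<psi>(0))\<close>, which is \<open>\<le> 0\<close> and vanishes only at \<open>p = 0\<close> because the
  gradient of a strictly convex function is strictly monotone. Hence the trajectory is bounded,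
  so its velocity is bounded and all continuous functions of the state are uniformly continuous
  in time. Barbalat's lemma applied to \<open>V\<close> gives \<open>V' \<rightarrow> 0\<close>, hence \<open>p \<rightarrow> 0\<close>; applied to \<open>p\<close> it
  gives \<open>p' \<rightarrow> 0\<close>, and then the momentum equation forces \<open>M\<^sup>T q \<rightarrow> B u - \<nabla>\<psi>(0)\<close>.
\<close>

section \<open>Gradients of strictly convex functions\<close>

lemma strictly_convex_on_imp_convex_on:
  assumes "strictly_convex_on S f" and "convex S"
  shows "convex_on S f"
proof (rule convex_onI)
  fix t :: real and x y assume t: "0 < t" "t < 1" and xy: "x \<in> S" "y \<in> S"
  show "f ((1 - t) *\<^sub>R x + t *\<^sub>R y) \<le> (1 - t) * f x + t * f y"
  proof (cases "x = y")
    case True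
    then show ?thesis by (simp add: scaleR_collapse algebra_simps)
  next
    case False
    then show ?thesis
      using assms(1) t xy unfolding strictly_convex_on_def by (simp add: less_imp_le)
  qed
qed (fact assms(2))

lemma convex_on_imp_above_tangent_plane:
  fixes f :: "'a::real_inner \<Rightarrow> real"
  assumes conv: "convex_on UNIV f" and deriv: "(f has_derivative (\<lambda>h. g \<bullet> h)) (at x)"
  shows "g \<bullet> (y - x) \<le> f y - f x"
proof -
  define \<phi> where "\<phi> s = f (x + s *\<^sub>R (y - x))" for s :: real
  have "convex_on UNIV \<phi>"
  proof (rule convex_onI)
    fix t a b :: real assume "0 < t" "t < 1"
    moreover have "x + ((1 - t) * a + t * b) *\<^sub>R (y - x)
        = (1 - t) *\<^sub>R (x + a *\<^sub>R (y - x)) + t *\<^sub>R (x + b *\<^sub>R (y - x))"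
      by (simp add: algebra_simps)
    ultimately show "\<phi> ((1 - t) *\<^sub>R a + t *\<^sub>R b) \<le> (1 - t) * \<phi> a + t * \<phi> b"
      using conv unfolding convex_on_def \<phi>_def by auto
  qed auto
  moreover have "(\<phi> has_field_derivative (g \<bullet> (y - x))) (at 0)"
  proof -
    have "((\<lambda>s. x + s *\<^sub>R (y - x)) has_derivative (\<lambda>h. h *\<^sub>R (y - x))) (at 0)"
      by (auto intro!: derivative_eq_intros)
    from has_derivative_compose[OF this, of f "\<lambda>h. g \<bullet> h"] deriv
    show ?thesis
      by (simp add: \<phi>_def[abs_def] o_def has_field_derivative_def mult.commute[of _ "g \<bullet> (y - x)"])
  qed
  ultimately have "\<phi> 1 - \<phi> 0 \<ge> g \<bullet> (y - x) * (1 - 0)"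
    by (intro convex_on_imp_above_tangent) auto
  then show ?thesis by (simp add: \<phi>_def)
qed

lemma strictly_convex_on_gradient_strict_mono:
  fixes f :: "'a::real_inner \<Rightarrow> real"
  assumes sc: "strictly_convex_on UNIV f"
    and grad: "\<And>x. (f has_derivative (\<lambda>h. G x \<bullet> h)) (at x)"
    and "x \<noteq> y"
  shows "0 < (G x - G y) \<bullet> (x - y)"
proof -
  have conv: "convex_on UNIV f" by (rule strictly_convex_on_imp_convex_on[OF sc]) simp
  define m where "m = (1 - 1/2) *\<^sub>R x + (1/2::real) *\<^sub>R y"
  have "(0::real) < 1/2" "(1/2::real) < 1" by simp_all
  then have "f m < (1 - 1/2) * f x + (1/2) * f y"
    using sc \<open>x \<noteq> y\<close> unfolding strictly_convex_on_def m_def by blast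
  moreover have "G x \<bullet> (m - x) \<le> f m - f x" "G y \<bullet> (m - y) \<le> f m - f y"
    by (intro convex_on_imp_above_tangent_plane[OF conv grad])+
  moreover have "m - x = (1/2::real) *\<^sub>R (y - x)" "m - y = (1/2::real) *\<^sub>R (x - y)"
    by (simp_all add: m_def algebra_simps scaleR_add_left[symmetric])
  ultimately have "G x \<bullet> (y - x) + G y \<bullet> (x - y) < 0"
    by simp
  then show ?thesis
    by (simp add: inner_diff_left inner_diff_right inner_commute algebra_simps)
qed

section \<open>Asymptotics of functions of time\<close>

lemma bounded_vector_derivative_imp_lipschitz:
  fixes f :: "real \<Rightarrow> 'a::real_normed_vector"
  assumes "convex S"
    and "\<And>t. t \<in> S \<Longrightarrow> (f has_vector_derivative f' t) (at t within S)"
    and "\<And>t. t \<in> S \<Longrightarrow> norm (f' t) \<le> K" and "0 \<le> K"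
  shows "K-lipschitz_on S f"
proof (rule bounded_derivative_imp_lipschitz[where f' = "\<lambda>t h. h *\<^sub>R f' t"])
  fix t assume "t \<in> S"
  then show "(f has_derivative (\<lambda>h. h *\<^sub>R f' t)) (at t within S)"
    using assms(2) by (simp add: has_vector_derivative_def)
  show "onorm (\<lambda>h. h *\<^sub>R f' t) \<le> K"
    using assms(3)[OF \<open>t \<in> S\<close>] onorm_scaleR_left[OF bounded_linear_ident, of "f' t"]
    by (simp add: onorm_id)
qed (use assms in auto)

lemma uniformly_continuous_on_subset:
  fixes f :: "'a::metric_space \<Rightarrow> 'b::metric_space"
  shows "uniformly_continuous_on T f \<Longrightarrow> S \<subseteq> T \<Longrightarrow> uniformly_continuous_on S f"
  unfolding uniformly_continuous_on_def by (meson subsetD)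

lemma uniformly_continuous_on_compose_compact:
  fixes z :: "'a::metric_space \<Rightarrow> 'b::metric_space" and h :: "'b \<Rightarrow> 'c::metric_space"
  assumes "uniformly_continuous_on S z" and "\<And>t. t \<in> S \<Longrightarrow> z t \<in> C"
    and "compact C" and "continuous_on C h"
  shows "uniformly_continuous_on S (\<lambda>t. h (z t))"
proof -
  have "uniformly_continuous_on (z ` S) h"
    by (rule uniformly_continuous_on_subset[OF compact_uniformly_continuous[OF assms(4,3)]])
      (use assms(2) in auto)
  from uniformly_continuous_on_compose[OF assms(1) this] show ?thesis by (simp add: o_def)
qed

lemma antimono_bounded_below_has_limit_at_top:
  fixes f :: "real \<Rightarrow> real"
  assumes antimono: "\<And>s t. a \<le> s \<Longrightarrow> s \<le> t \<Longrightarrow> f t \<le> f s"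
    and bounded: "\<And>t. a \<le> t \<Longrightarrow> b \<le> f t"
  shows "\<exists>L. (f \<longlongrightarrow> L) at_top"
proof -
  define L where "L = Inf (f ` {a..})"
  have bdd: "bdd_below (f ` {a..})" using bounded by (auto intro!: bdd_belowI)
  have "(f \<longlongrightarrow> L) at_top"
  proof (rule decreasing_tendsto)
    show "\<forall>\<^sub>F t in at_top. L \<le> f t"
      using eventually_ge_at_top[of a] by eventually_elim (auto simp: L_def intro!: cInf_lower bdd)
  next
    fix x assume "L < x"
    then obtain t0 where t0: "a \<le> t0" "f t0 < x"
      unfolding L_def by (subst (asm) cInf_less_iff) (auto simp: bdd)
    show "\<forall>\<^sub>F t in at_top. f t < x"
      using eventually_ge_at_top[of t0] by eventually_elim (use antimono[of t0] t0 in fastforce)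
  qed
  then show ?thesis by blast
qed

lemma Barbalat_lemma:
  fixes f f' :: "real \<Rightarrow> 'a::real_normed_vector"
  assumes der: "\<And>t. t \<ge> 0 \<Longrightarrow> (f has_vector_derivative f' t) (at t within {0..})"
    and lim: "(f \<longlongrightarrow> L) at_top"
    and uc: "uniformly_continuous_on {0..} f'"
  shows "(f' \<longlongrightarrow> 0) at_top"
proof (rule tendstoI)
  fix e :: real assume "e > 0"
  then obtain d where "d > 0"
    and close: "\<And>s t. s \<ge> 0 \<Longrightarrow> t \<ge> 0 \<Longrightarrow> dist s t < d \<Longrightarrow> dist (f' s) (f' t) < e/2"
    using uc unfolding uniformly_continuous_on_def by (metis atLeast_iff half_gt_zero)
  define h where "h = d/2"
  have "h > 0" "h < d" using \<open>d > 0\<close> by (auto simp: h_def)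
  have "\<forall>\<^sub>F t in at_top. dist (f t) L < h * e/4"
    using tendstoD[OF lim, of "h * e/4"] \<open>h > 0\<close> \<open>e > 0\<close> by simp
  moreover have "\<forall>\<^sub>F t in at_top. dist (f (t + h)) L < h * e/4"
    using filterlim_compose[OF lim filterlim_tendsto_add_at_top[OF tendsto_const[of h] filterlim_ident]]
    by (auto dest!: tendstoD[where e = "h * e/4"] simp: add.commute[of h] \<open>h > 0\<close> \<open>e > 0\<close>)
  ultimately show "\<forall>\<^sub>F t in at_top. dist (f' t) 0 < e"
    using eventually_ge_at_top[of 0]
  proof eventually_elim
    case (elim t)
    \<comment> \<open>On \<open>[t, t + h]\<close> the derivative stays \<open>e/2\<close>-close to \<open>f' t\<close>, so \<open>h f' t\<close> is
      \<open>h e/2\<close>-close to \<open>f (t + h) - f t\<close>, which is small once \<open>f\<close> is near its limit.\<close>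
    have "norm (f (t + h) - f t - (t + h - t) *\<^sub>R f' t) \<le> norm (t + h - t) * (e/2)"
    proof (rule vector_differentiable_bound_linearization[where S = "{t..t + h}"])
      show "(f has_vector_derivative f' s) (at s within {t..t + h})" if "s \<in> {t..t + h}" for s
        using der[of s] that elim by (auto intro: has_vector_derivative_within_subset)
      show "norm (f' s - f' t) \<le> e/2" if "s \<in> {t..t + h}" for s
        using close[of s t] that elim \<open>h < d\<close> by (auto simp: dist_norm)
    qed (use \<open>h > 0\<close> in \<open>auto simp: closed_segment_eq_real_ivl\<close>)
    then have "norm (h *\<^sub>R f' t - (f (t + h) - f t)) \<le> h * e/2"
      using \<open>h > 0\<close> by (simp add: norm_minus_commute)
    moreover have "norm (f (t + h) - f t) < h * e/2"
      using norm_triangle_ineq4[of "f (t + h) - L" "f t - L"] elim by (simp add: dist_norm)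
    moreover have "norm (h *\<^sub>R f' t) = h * norm (f' t)" using \<open>h > 0\<close> by simp
    ultimately have "h * norm (f' t) < h * e"
      using norm_triangle_sub[of "h *\<^sub>R f' t" "f (t + h) - f t"] by linarith
    then show ?case using \<open>h > 0\<close> by simp
  qed
qed

lemma tendsto_zero_if_positive_definite:
  fixes x :: "'b \<Rightarrow> 'a::{real_normed_vector, heine_borel}" and g :: "'a \<Rightarrow> real"
  assumes cont: "continuous_on UNIV g" and pos: "\<And>y. y \<noteq> 0 \<Longrightarrow> 0 < g y"
    and bounded: "\<forall>\<^sub>F t in F. norm (x t) \<le> R"
    and lim: "((\<lambda>t. g (x t)) \<longlongrightarrow> 0) F"
  shows "(x \<longlongrightarrow> 0) F"
proof (rule tendstoI)
  fix e :: real assume "e > 0"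
  define A where "A = cball 0 R - ball (0::'a) e"
  show "\<forall>\<^sub>F t in F. dist (x t) 0 < e"
  proof (cases "A = {}")
    case True
    from bounded show ?thesis
      by eventually_elim (use True in \<open>auto simp: A_def dist_norm set_eq_iff\<close>)
  next
    case False
    have "compact A" unfolding A_def by (intro compact_diff compact_cball open_ball)
    then obtain y0 where "y0 \<in> A" and min: "\<And>y. y \<in> A \<Longrightarrow> g y0 \<le> g y"
      using continuous_attains_inf[OF _ False continuous_on_subset[OF cont]] by auto
    then have "y0 \<noteq> 0" using \<open>e > 0\<close> by (auto simp: A_def)
    then have "0 < g y0" by (rule pos)
    from tendstoD[OF lim \<open>0 < g y0\<close>] bounded show ?thesis
    proof eventually_elim
      case (elim t)
      then have "x t \<notin> A" using min[of "x t"] by (auto simp: dist_norm)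
      then show ?case using elim by (auto simp: A_def dist_norm)
    qed
  qed
qed

section \<open>The damped Hamiltonian system\<close>

lemma matrix_inv_cancel:
  fixes A :: "'a::comm_semiring_1^'n^'m"
  assumes "invertible A"
  shows "A *v (matrix_inv A *v x) = x" and "matrix_inv A *v (A *v y) = y"
proof -
  have "A ** matrix_inv A = mat 1 \<and> matrix_inv A ** A = mat 1"
    using someI_ex[OF assms[unfolded invertible_def]] unfolding matrix_inv_def .
  then show "A *v (matrix_inv A *v x) = x" "matrix_inv A *v (A *v y) = y"
    by (simp_all add: matrix_vector_mul_assoc)
qed

locale damped_hamiltonian_system =
  fixes M :: "real^'n^'n" and B :: "real^'m^'n" and G :: "real^'n \<Rightarrow> real^'n"
    and u :: "real^'m" and q p :: "real \<Rightarrow> real^'n"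
  assumes M_invertible: "invertible M"
    and G_continuous: "continuous_on UNIV G"
    and G_strict_mono: "\<And>x y. x \<noteq> y \<Longrightarrow> 0 < (G x - G y) \<bullet> (x - y)"
    and q_ode: "\<And>t. t \<ge> 0 \<Longrightarrow> (q has_vector_derivative (M *v p t)) (at t within {0..})"
    and p_ode: "\<And>t. t \<ge> 0 \<Longrightarrow>
      (p has_vector_derivative (- (transpose M *v q t) - G (p t) + B *v u)) (at t within {0..})"
begin

definition q_equilibrium :: "real^'n" where
  "q_equilibrium = matrix_inv (transpose M) *v (B *v u - G 0)"

definition vector_field :: "(real^'n) \<times> (real^'n) \<Rightarrow> (real^'n) \<times> (real^'n)" where
  "vector_field z = (M *v snd z, - (transpose M *v fst z) - G (snd z) + B *v u)"

definition lyapunov :: "real \<Rightarrow> real" where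
  "lyapunov t = (q t - q_equilibrium) \<bullet> (q t - q_equilibrium) + p t \<bullet> p t"

definition dissipation :: "real^'n \<Rightarrow> real" where
  "dissipation y = y \<bullet> (G y - G 0)"

lemma transpose_M_q_equilibrium: "transpose M *v q_equilibrium = B *v u - G 0"
  unfolding q_equilibrium_def by (rule matrix_inv_cancel(1)[OF transpose_invertible[OF M_invertible]])

lemma dissipation_pos: "y \<noteq> 0 \<Longrightarrow> 0 < dissipation y"
  using G_strict_mono[of y 0] by (simp add: dissipation_def inner_commute)

lemma dissipation_nonneg: "0 \<le> dissipation y"
  using dissipation_pos[of y] by (cases "y = 0") (auto simp: dissipation_def)

lemma continuous_on_dissipation: "continuous_on UNIV dissipation"
  unfolding dissipation_def by (intro continuous_intros G_continuous)

lemma continuous_on_vector_field: "continuous_on UNIV vector_field"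
  unfolding vector_field_def
  by (intro continuous_intros continuous_on_compose2[OF G_continuous]
      matrix_vector_mul_bounded_linear[THEN bounded_linear.continuous_on]) auto

lemma state_has_vector_derivative:
  "t \<ge> 0 \<Longrightarrow> ((\<lambda>t. (q t, p t)) has_vector_derivative vector_field (q t, p t)) (at t within {0..})"
  using has_vector_derivative_Pair[OF q_ode p_ode] by (simp add: vector_field_def)

lemma lyapunov_has_vector_derivative:
  assumes "t \<ge> 0"
  shows "(lyapunov has_vector_derivative - 2 * dissipation (p t)) (at t within {0..})"
proof -
  define p' where "p' = - (transpose M *v q t) - G (p t) + B *v u"
  have "p' = - (transpose M *v (q t - q_equilibrium)) - (G (p t) - G 0)"
    unfolding p'_def matrix_vector_mult_diff_distrib transpose_M_q_equilibrium by (simp add: algebra_simps)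
  moreover have "p t \<bullet> (transpose M *v w) = w \<bullet> (M *v p t)" for w
    using dot_lmul_matrix[of w M "p t"] by (simp add: inner_commute)
  ultimately have cancel: "(q t - q_equilibrium) \<bullet> (M *v p t) + p t \<bullet> p' = - dissipation (p t)"
    by (simp add: dissipation_def inner_diff_right)
  have "((\<lambda>t. q t - q_equilibrium) has_derivative (\<lambda>h. h *\<^sub>R (M *v p t))) (at t within {0..})"
    using q_ode[OF assms] by (auto intro!: derivative_eq_intros simp: has_vector_derivative_def)
  moreover have "(p has_derivative (\<lambda>h. h *\<^sub>R p')) (at t within {0..})"
    using p_ode[OF assms] by (simp add: p'_def has_vector_derivative_def)
  ultimately have "(lyapunov has_derivative
      (\<lambda>h. h *\<^sub>R (2 * ((q t - q_equilibrium) \<bullet> (M *v p t) + p t \<bullet> p')))) (at t within {0..})"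
    unfolding lyapunov_def[abs_def]
    by (intro has_derivative_eq_rhs[OF has_derivative_add[OF has_derivative_inner has_derivative_inner]])
      (auto simp: fun_eq_iff inner_commute algebra_simps)
  then show ?thesis by (simp add: has_vector_derivative_def cancel)
qed

lemma lyapunov_antimono:
  assumes "0 \<le> s" "s \<le> t"
  shows "lyapunov t \<le> lyapunov s"
proof -
  have "(lyapunov has_derivative (\<lambda>h. h *\<^sub>R (- 2 * dissipation (p x)))) (at x within {s..t})"
    if "s \<le> x" "x \<le> t" for x
    using lyapunov_has_vector_derivative[of x] assms that
    by (auto simp: has_vector_derivative_def intro: has_derivative_subset)
  from mvt_very_simple[OF \<open>s \<le> t\<close> this] obtain x
    where "lyapunov t - lyapunov s = (t - s) * (- 2 * dissipation (p x))"
    by auto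
  moreover have "0 \<le> (t - s) * dissipation (p x)"
    using assms dissipation_nonneg by simp
  ultimately show ?thesis by simp
qed

lemma trajectory_bounded:
  assumes "0 \<le> t"
  shows "norm (p t) \<le> sqrt (lyapunov 0)" and "norm (q t - q_equilibrium) \<le> sqrt (lyapunov 0)"
proof -
  have "norm (p t) ^ 2 + norm (q t - q_equilibrium) ^ 2 \<le> lyapunov 0"
    using lyapunov_antimono[OF order_refl assms] by (simp add: lyapunov_def power2_norm_eq_inner)
  moreover have "0 \<le> norm (p t) ^ 2" "0 \<le> norm (q t - q_equilibrium) ^ 2" by simp_all
  ultimately have "norm (p t) ^ 2 \<le> lyapunov 0" "norm (q t - q_equilibrium) ^ 2 \<le> lyapunov 0"
    by linarith+
  then show "norm (p t) \<le> sqrt (lyapunov 0)" "norm (q t - q_equilibrium) \<le> sqrt (lyapunov 0)"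
    by (simp_all add: real_le_rsqrt)
qed

lemma uniformly_continuous_along_trajectory:
  fixes h :: "(real^'n) \<times> (real^'n) \<Rightarrow> 'c::metric_space"
  assumes "continuous_on UNIV h"
  shows "uniformly_continuous_on {0..} (\<lambda>t. h (q t, p t))"
proof -
  define R where "R = sqrt (lyapunov 0)"
  define C where "C = cball (0::real^'n) (norm q_equilibrium + R) \<times> cball (0::real^'n) R"
  have "compact C" unfolding C_def by (intro compact_Times compact_cball)
  have in_C: "(q t, p t) \<in> C" if "t \<in> {0..}" for t
    using trajectory_bounded[of t] norm_triangle_ineq2[of "q t" q_equilibrium] that
    by (auto simp: C_def R_def)
  obtain K where "0 < K" and K: "\<And>z. z \<in> C \<Longrightarrow> norm (vector_field z) \<le> K"
    using compact_continuous_image[OF continuous_on_subset[OF continuous_on_vector_field] \<open>compact C\<close>]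
    by (auto dest!: compact_imp_bounded simp: bounded_pos)
  have "K-lipschitz_on {0..} (\<lambda>t. (q t, p t))"
    using state_has_vector_derivative K in_C \<open>0 < K\<close>
    by (intro bounded_vector_derivative_imp_lipschitz) auto
  then have "uniformly_continuous_on {0..} (\<lambda>t. (q t, p t))"
    by (rule lipschitz_on_uniformly_continuous)
  then show ?thesis
    using in_C \<open>compact C\<close> continuous_on_subset[OF assms subset_UNIV]
    by (rule uniformly_continuous_on_compose_compact)
qed

lemma p_tendsto_zero: "(p \<longlongrightarrow> 0) at_top"
proof -
  obtain L where "(lyapunov \<longlongrightarrow> L) at_top"
    using antimono_bounded_below_has_limit_at_top[of 0 lyapunov 0] lyapunov_antimono
    by (auto simp: lyapunov_def)
  moreover have "uniformly_continuous_on {0..} (\<lambda>t. - 2 * dissipation (p t))"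
    using uniformly_continuous_along_trajectory[of "\<lambda>z. - 2 * dissipation (snd z)"]
    by (simp add: continuous_intros continuous_on_compose2[OF continuous_on_dissipation])
  ultimately have "((\<lambda>t. - 2 * dissipation (p t)) \<longlongrightarrow> 0) at_top"
    using lyapunov_has_vector_derivative by (intro Barbalat_lemma[where f = lyapunov]) auto
  then have "((\<lambda>t. dissipation (p t)) \<longlongrightarrow> 0) at_top"
    using tendsto_mult_right_zero[of _ at_top "- 1/2"] by fastforce
  moreover have "\<forall>\<^sub>F t in at_top. norm (p t) \<le> sqrt (lyapunov 0)"
    using eventually_ge_at_top[of 0] by eventually_elim (rule trajectory_bounded)
  ultimately show ?thesis
    using tendsto_zero_if_positive_definite continuous_on_dissipation dissipation_pos by blast
qed

lemma q_tendsto_q_equilibrium: "(q \<longlongrightarrow> q_equilibrium) at_top"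
proof -
  define p' where "p' t = - (transpose M *v q t) - G (p t) + B *v u" for t
  have "continuous_on UNIV (\<lambda>z. snd (vector_field z))"
    by (intro continuous_intros continuous_on_vector_field)
  then have "uniformly_continuous_on {0..} (\<lambda>t. snd (vector_field (q t, p t)))"
    by (rule uniformly_continuous_along_trajectory)
  then have "uniformly_continuous_on {0..} p'"
    by (simp add: p'_def[abs_def] vector_field_def)
  then have "(p' \<longlongrightarrow> 0) at_top"
    using Barbalat_lemma[OF _ p_tendsto_zero] p_ode by (simp add: p'_def)
  moreover have "((\<lambda>t. G (p t)) \<longlongrightarrow> G 0) at_top"
    using continuous_on_tendsto_compose[OF G_continuous p_tendsto_zero] by simp
  ultimately have "((\<lambda>t. B *v u - G (p t) - p' t) \<longlongrightarrow> B *v u - G 0 - 0) at_top"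
    by (intro tendsto_intros)
  then have "((\<lambda>t. transpose M *v q t) \<longlongrightarrow> B *v u - G 0) at_top"
    by (simp add: p'_def)
  from bounded_linear.tendsto[OF matrix_vector_mul_bounded_linear this, of "matrix_inv (transpose M)"]
  show ?thesis
    unfolding q_equilibrium_def[symmetric]
      matrix_inv_cancel(2)[OF transpose_invertible[OF M_invertible]] .
qed

end

theorem mainTheorem14:
  fixes M :: "real^'n^'n" and B :: "real^'m^'n"
    and \<psi> :: "real^'n \<Rightarrow> real" and grad\<psi> :: "real^'n \<Rightarrow> real^'n"
    and u :: "real^'m"
    and q p :: "real \<Rightarrow> real^'n"
  assumes M_inv: "invertible M"
    and grad: "\<And>x. (\<psi> has_derivative (\<lambda>h. grad\<psi> x \<bullet> h)) (at x)"
    and grad_cont: "continuous_on UNIV grad\<psi>"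
    and grad_loclip: "\<And>x. \<exists>r>0. \<exists>L. L-lipschitz_on (cball x r) grad\<psi>"
    and strict_conv: "strictly_convex_on UNIV \<psi>"
    and coercive: "filterlim (\<lambda>x. \<psi> x / norm x) at_top at_infinity"
    and q_ode: "\<And>t. t \<ge> 0 \<Longrightarrow> (q has_vector_derivative (M *v p t)) (at t within {0..})"
    and p_ode: "\<And>t. t \<ge> 0 \<Longrightarrow>
        (p has_vector_derivative (- (transpose M *v q t) - grad\<psi> (p t) + B *v u)) (at t within {0..})"
  shows "(p \<longlongrightarrow> 0) at_top \<and>
    (q \<longlongrightarrow> (matrix_inv (transpose M) *v (B *v u) - matrix_inv (transpose M) *v grad\<psi> 0)) at_top"
proof -
  \<comment> \<open>Local Lipschitz continuity and coercivity only serve existence of global solutions,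
    which the hypotheses on \<open>q\<close> and \<open>p\<close> already provide.\<close>
  interpret damped_hamiltonian_system M B grad\<psi> u q p
    using M_inv grad_cont strictly_convex_on_gradient_strict_mono[OF strict_conv grad] q_ode p_ode
    by unfold_locales auto
  show ?thesis
    using p_tendsto_zero q_tendsto_q_equilibrium
    by (simp add: q_equilibrium_def matrix_vector_mult_diff_distrib)
qed

end
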